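(* Let $\vec B_0$ be the oriented graph with vertex set $\{x_1,\dots,x_8\}$ and arcs $x_5x_4,\ x_6x_4,\ x_7x_4,\ x_4x_1,\ x_4x_2,\ x_4x_3,\ x_1x_2,\ x_2x_3,\ x_5x_6,\ x_6x_7$ and $x_8x_i$ for all $i\in\{1,\dots,7\}$. Then $\vec B_0$ is planar and $\chi_p([\vec B_0])=8$; more precisely, under any homomorphism of any presentation of $[\vec B_0]$ to any oriented graph, the eight vertices have pairwise distinct images.
   Context: An oriented graph is a directed graph with no loops and no pair of opposite arcs. A homomorphism of oriented graphs $\vec G\to\vec H$ is a vertex map sending every arc $uv$ to an arc $\varphi(u)\varphi(v)$. To push a vertex means to reverse all arcs incident with it; the push graph $[\vec G]$ is the set of oriented graphs obtainable from $\vec G$ by pushing some set of vertices (its presentations). The push chromatic number $\chi_p([\vec G])$ is the minimum number of vertices of an oriented graph $\vec H$ such that some presentation of $[\vec G]$ admits a homomorphism to $\vec H$. *)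

theory Defs
  imports "HOL-Analysis.Analysis"
begin

definition oriented :: "'a set \<Rightarrow> ('a \<times> 'a) set \<Rightarrow> bool" where
  "oriented V A \<longleftrightarrow> A \<subseteq> V \<times> V \<and> (\<forall>u v. (u, v) \<in> A \<longrightarrow> u \<noteq> v \<and> (v, u) \<notin> A)"

text \<open>Pushing the set S of vertices: an arc is reversed iff exactly one endpoint lies in S
  (pushing each vertex of S once).\<close>
definition push :: "'a set \<Rightarrow> ('a \<times> 'a) set \<Rightarrow> ('a \<times> 'a) set" where
  "push S A = {(u, v). (u, v) \<in> A \<and> (u \<in> S \<longleftrightarrow> v \<in> S)}
            \<union> {(v, u) | u v. (u, v) \<in> A \<and> \<not> (u \<in> S \<longleftrightarrow> v \<in> S)}"

definition presentations :: "'a set \<Rightarrow> ('a \<times> 'a) set \<Rightarrow> ('a \<times> 'a) set set" where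
  "presentations V A = {push S A | S. S \<subseteq> V}"

definition ohom :: "'a set \<Rightarrow> ('a \<times> 'a) set \<Rightarrow> 'b set \<Rightarrow> ('b \<times> 'b) set \<Rightarrow> ('a \<Rightarrow> 'b) \<Rightarrow> bool" where
  "ohom V A W B f \<longleftrightarrow> (\<forall>v\<in>V. f v \<in> W) \<and> (\<forall>u v. (u, v) \<in> A \<longrightarrow> (f u, f v) \<in> B)"

text \<open>Push chromatic number: least number of vertices of a (finite) oriented graph H such that
  some presentation admits a homomorphism to H. Target vertices are taken from nat w.l.o.g.\<close>
definition push_chromatic_number :: "'a set \<Rightarrow> ('a \<times> 'a) set \<Rightarrow> nat" where
  "push_chromatic_number V A = (LEAST k. \<exists>A' \<in> presentations V A. \<exists>(W :: nat set) B f.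
      finite W \<and> card W = k \<and> oriented W B \<and> ohom V A' W B f)"

definition planar :: "'a set \<Rightarrow> ('a \<times> 'a) set \<Rightarrow> bool" where
  "planar V A \<longleftrightarrow> (\<exists>(p :: 'a \<Rightarrow> complex) (g :: 'a \<times> 'a \<Rightarrow> real \<Rightarrow> complex).
      inj_on p V \<and>
      (\<forall>e\<in>A. arc (g e) \<and> pathstart (g e) = p (fst e) \<and> pathfinish (g e) = p (snd e)) \<and>
      (\<forall>e\<in>A. \<forall>v\<in>V. p v \<in> path_image (g e) \<longrightarrow> v = fst e \<or> v = snd e) \<and>
      (\<forall>e\<in>A. \<forall>e'\<in>A. e \<noteq> e' \<longrightarrow>
          path_image (g e) \<inter> path_image (g e') \<subseteq> p ` ({fst e, snd e} \<inter> {fst e', snd e'})))"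

text \<open>The oriented graph B0 on vertices x1..x8 (represented by 1..8).\<close>
definition B0_V :: "nat set" where "B0_V = {1..8}"

definition B0_A :: "(nat \<times> nat) set" where
  "B0_A = {(5,4), (6,4), (7,4), (4,1), (4,2), (4,3), (1,2), (2,3), (5,6), (6,7)}
          \<union> {(8, i) | i. i \<in> {1..7}}"

end

theory Submission
  imports Defs
begin

(*
  In a 2-path a - m - c, pushing a or c changes whether the path is directed (a -> m -> c
  or c -> m -> a), while pushing m does not. So if a and c are joined by a directed 2-path
  and also by a non-directed one, then in every presentation exactly one of the two is
  directed. A homomorphism to an oriented graph identifying a and c would map that directed
  2-path onto a pair of opposite arcs; hence a and c get distinct images, as do adjacent
  vertices. In B0 every pair of non-adjacent vertices among x1..x7 is joined by the
  non-directed path through x8 and by a directed path through x4, x2 or x6, so every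
  homomorphism of every presentation is injective, and B0 itself shows that 8 colours suffice.

  For planarity, put xi at (i - 4, (i - 4)^2) on the parabola y = x^2 for i <> 4, x4 at
  (0, -9) below it and x8 at (0, 5) inside it; the straight-line drawing is checked with
  orientation (cross product) tests.
*)

lemma oriented_arcD:
  assumes "oriented V A" and "(u, v) \<in> A"
  shows "u \<noteq> v" and "(v, u) \<notin> A"
  using assms unfolding oriented_def by auto

lemma oriented_iff_ball:
  "oriented V A \<longleftrightarrow> A \<subseteq> V \<times> V \<and> (\<forall>(u, v)\<in>A. u \<noteq> v \<and> (v, u) \<notin> A)"
  unfolding oriented_def by auto

lemma ohom_push_arc:
  assumes "ohom V (push S A) W B f" and "(u, v) \<in> A"
  shows "if u \<in> S \<longleftrightarrow> v \<in> S then (f u, f v) \<in> B else (f v, f u) \<in> B"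
  using assms unfolding ohom_def push_def by auto

lemma ohom_push_adjacent_neq:
  assumes "oriented W B" and "ohom V (push S A) W B f" and "(u, v) \<in> A"
  shows "f u \<noteq> f v"
proof
  assume "f u = f v"
  then have "(f u, f u) \<in> B"
    using ohom_push_arc[OF assms(2,3)] by (simp split: if_splits)
  then show False
    using oriented_arcD(1)[OF assms(1)] by blast
qed

lemma ohom_push_directed_path_sides:
  assumes "oriented W B" and h: "ohom V (push S A) W B f"
    and "(a, m) \<in> A" "(m, c) \<in> A" "f a = f c"
  shows "a \<in> S \<longleftrightarrow> c \<notin> S"
  using ohom_push_arc[OF h \<open>(a, m) \<in> A\<close>] ohom_push_arc[OF h \<open>(m, c) \<in> A\<close>] assms(5)
    oriented_arcD[OF assms(1)] by (auto split: if_splits)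

lemma ohom_push_antidirected_path_sides:
  assumes "oriented W B" and h: "ohom V (push S A) W B f"
    and "(m, a) \<in> A \<and> (m, c) \<in> A \<or> (a, m) \<in> A \<and> (c, m) \<in> A" and "f a = f c"
  shows "a \<in> S \<longleftrightarrow> c \<in> S"
  using assms(3)
proof
  assume "(m, a) \<in> A \<and> (m, c) \<in> A"
  then show ?thesis
    using ohom_push_arc[OF h, of m a] ohom_push_arc[OF h, of m c] assms(4)
      oriented_arcD[OF assms(1)] by (auto split: if_splits)
next
  assume "(a, m) \<in> A \<and> (c, m) \<in> A"
  then show ?thesis
    using ohom_push_arc[OF h, of a m] ohom_push_arc[OF h, of c m] assms(4)
      oriented_arcD[OF assms(1)] by (auto split: if_splits)
qed

definition push_separated :: "('a \<times> 'a) set \<Rightarrow> 'a \<Rightarrow> 'a \<Rightarrow> bool" where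
  "push_separated A a c \<longleftrightarrow> (a, c) \<in> A \<or> (c, a) \<in> A \<or>
     (\<exists>m m'. ((a, m) \<in> A \<and> (m, c) \<in> A \<or> (c, m) \<in> A \<and> (m, a) \<in> A) \<and>
            ((m', a) \<in> A \<and> (m', c) \<in> A \<or> (a, m') \<in> A \<and> (c, m') \<in> A))"

lemma push_separated_sym: "push_separated A a c \<Longrightarrow> push_separated A c a"
  unfolding push_separated_def by blast

lemma push_separatedI_arc: "(a, c) \<in> A \<Longrightarrow> push_separated A a c"
  unfolding push_separated_def by blast

lemma push_separatedI_paths:
  "(a, m) \<in> A \<Longrightarrow> (m, c) \<in> A \<Longrightarrow> (m', a) \<in> A \<Longrightarrow> (m', c) \<in> A \<Longrightarrow>
    push_separated A a c"
  unfolding push_separated_def by blast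

lemma ohom_push_separated_neq:
  assumes "oriented W B" and "ohom V (push S A) W B f" and "push_separated A a c"
  shows "f a \<noteq> f c"
proof
  assume eq: "f a = f c"
  from assms(3) consider "(a, c) \<in> A \<or> (c, a) \<in> A"
    | m m' where "(a, m) \<in> A \<and> (m, c) \<in> A \<or> (c, m) \<in> A \<and> (m, a) \<in> A"
        and "(m', a) \<in> A \<and> (m', c) \<in> A \<or> (a, m') \<in> A \<and> (c, m') \<in> A"
    unfolding push_separated_def by blast
  then show False
  proof cases
    case 1
    then show False
      using ohom_push_adjacent_neq[OF assms(1,2)] eq by fastforce
  next
    case (2 m m')
    have "a \<in> S \<longleftrightarrow> c \<notin> S"
      using 2(1) ohom_push_directed_path_sides[OF assms(1,2)] eq by fastforce
    moreover have "a \<in> S \<longleftrightarrow> c \<in> S"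
      using ohom_push_antidirected_path_sides[OF assms(1,2) 2(2) eq] .
    ultimately show False
      by blast
  qed
qed

lemma push_separated_inj_on:
  assumes "\<And>a c. a \<in> V \<Longrightarrow> c \<in> V \<Longrightarrow> a \<noteq> c \<Longrightarrow> push_separated A a c"
    and "A' \<in> presentations V A" and "oriented W B" and "ohom V A' W B f"
  shows "inj_on f V"
proof -
  obtain S where "A' = push S A"
    using assms(2) unfolding presentations_def by blast
  then have "f a \<noteq> f c" if "a \<in> V" "c \<in> V" "a \<noteq> c" for a c
    using ohom_push_separated_neq[OF assms(3) _ assms(1)[OF that]] assms(4) by simp
  then show ?thesis
    unfolding inj_on_def by blast
qed

lemma push_empty: "push {} A = A"
  unfolding push_def by auto

lemma push_chromatic_number_eq_card:
  fixes V :: "nat set"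
  assumes "finite V" and "oriented V A"
    and "\<And>a c. a \<in> V \<Longrightarrow> c \<in> V \<Longrightarrow> a \<noteq> c \<Longrightarrow> push_separated A a c"
  shows "push_chromatic_number V A = card V"
  unfolding push_chromatic_number_def
proof (rule Least_equality)
  have "A \<in> presentations V A"
    unfolding presentations_def using push_empty by blast
  moreover have "ohom V A V A id"
    unfolding ohom_def using assms(2) unfolding oriented_def by auto
  ultimately show "\<exists>A'\<in>presentations V A. \<exists>(W :: nat set) B f.
      finite W \<and> card W = card V \<and> oriented W B \<and> ohom V A' W B f"
    using assms(1,2) by blast
next
  fix k
  assume "\<exists>A'\<in>presentations V A. \<exists>(W :: nat set) B f.
      finite W \<and> card W = k \<and> oriented W B \<and> ohom V A' W B f"
  then obtain A' W B and f :: "nat \<Rightarrow> nat"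
    where "A' \<in> presentations V A" "finite W" "card W = k" "oriented W B" "ohom V A' W B f"
    by blast
  moreover from this have "inj_on f V"
    using push_separated_inj_on[OF assms(3)] by blast
  moreover have "f ` V \<subseteq> W"
    using \<open>ohom V A' W B f\<close> unfolding ohom_def by auto
  ultimately show "card V \<le> k"
    using card_mono card_image by metis
qed

definition cross :: "complex \<Rightarrow> complex \<Rightarrow> real" where
  "cross z w = Im (cnj z * w)"

lemma cross_scaleR_right [simp]: "cross z (r *\<^sub>R w) = r * cross z w"
  by (simp add: cross_def scaleR_conv_of_real algebra_simps)

lemma cross_add_right [simp]: "cross z (w + w') = cross z w + cross z w'"
  by (simp add: cross_def algebra_simps)

lemma cross_0_right [simp]: "cross z 0 = 0"
  by (simp add: cross_def)

lemma cross_self [simp]: "cross z z = 0"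
  by (simp add: cross_def)

lemma cross_Complex [simp]: "cross (Complex a b) (Complex c d) = a * d - b * c"
  by (simp add: cross_def)

lemma cross_closed_segment:
  assumes "z \<in> closed_segment x y"
  obtains u where "0 \<le> u" "u \<le> 1" "z = (1 - u) *\<^sub>R x + u *\<^sub>R y"
    and "cross v (z - a) = (1 - u) * cross v (x - a) + u * cross v (y - a)"
proof -
  obtain u where u: "0 \<le> u" "u \<le> 1" "z = (1 - u) *\<^sub>R x + u *\<^sub>R y"
    using assms by (auto simp: in_segment)
  then have "z - a = (1 - u) *\<^sub>R (x - a) + u *\<^sub>R (y - a)"
    by (simp add: algebra_simps)
  with u that show thesis
    by simp
qed

lemma cross_closed_segment_eq_0:
  assumes "z \<in> closed_segment a b"
  shows "cross (b - a) (z - a) = 0"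
proof -
  obtain u
    where "cross (b - a) (z - a) = (1 - u) * cross (b - a) (a - a) + u * cross (b - a) (b - a)"
    by (rule cross_closed_segment[OF assms])
  then show ?thesis
    by simp
qed

lemma closed_segment_disjoint_if_same_side:
  assumes "0 < cross (b - a) (c - a) * cross (b - a) (d - a)"
  shows "closed_segment a b \<inter> closed_segment c d = {}"
proof (rule ccontr)
  define C D where "C = cross (b - a) (c - a)" and "D = cross (b - a) (d - a)"
  assume "closed_segment a b \<inter> closed_segment c d \<noteq> {}"
  then obtain z where "z \<in> closed_segment a b" and "z \<in> closed_segment c d"
    by blast
  obtain s where "0 \<le> s" "s \<le> 1" and "cross (b - a) (z - a) = (1 - s) * C + s * D"
    unfolding C_def D_def by (rule cross_closed_segment[OF \<open>z \<in> closed_segment c d\<close>])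
  moreover have "cross (b - a) (z - a) = 0"
    by (rule cross_closed_segment_eq_0[OF \<open>z \<in> closed_segment a b\<close>])
  moreover have "(1 - s) * C + s * D \<noteq> 0"
  proof -
    from assms consider "C < 0" "D < 0" | "- C < 0" "- D < 0"
      unfolding C_def D_def zero_less_mult_iff by force
    then show ?thesis
    proof cases
      case 1
      have "(1 - s) * C + s * D < 0"
        by (rule convex_bound_lt) (use 1 \<open>0 \<le> s\<close> \<open>s \<le> 1\<close> in auto)
      then show ?thesis
        by simp
    next
      case 2
      have "(1 - s) * (- C) + s * (- D) < 0"
        by (rule convex_bound_lt) (use 2 \<open>0 \<le> s\<close> \<open>s \<le> 1\<close> in auto)
      then show ?thesis
        by simp
    qed
  qed
  ultimately show False
    by simp
qed

lemma closed_segment_Int_common_end: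
  assumes "cross (b - a) (c - a) \<noteq> 0"
  shows "closed_segment a b \<inter> closed_segment a c = {a}"
proof
  show "closed_segment a b \<inter> closed_segment a c \<subseteq> {a}"
  proof
    fix z
    assume z: "z \<in> closed_segment a b \<inter> closed_segment a c"
    obtain s where "0 \<le> s" "s \<le> 1" "z = (1 - s) *\<^sub>R a + s *\<^sub>R c"
      and "cross (b - a) (z - a) = (1 - s) * cross (b - a) (a - a) + s * cross (b - a) (c - a)"
      by (rule cross_closed_segment[of z a c]) (use z in blast)
    moreover have "cross (b - a) (z - a) = 0"
      using z cross_closed_segment_eq_0 by blast
    ultimately show "z \<in> {a}"
      using assms by simp
  qed
qed auto

lemma closed_segment_Int_common_end_any_order:
  assumes "cross (b - a) (c - a) \<noteq> 0"
  shows "closed_segment a b \<inter> closed_segment a c = {a}"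
    and "closed_segment b a \<inter> closed_segment a c = {a}"
    and "closed_segment a b \<inter> closed_segment c a = {a}"
    and "closed_segment b a \<inter> closed_segment c a = {a}"
  using closed_segment_Int_common_end[OF assms] by (simp_all add: closed_segment_commute)

lemma closed_segment_disjoint_if_separated:
  assumes "0 < cross (b - a) (c - a) * cross (b - a) (d - a) \<or>
    0 < cross (d - c) (a - c) * cross (d - c) (b - c)"
  shows "closed_segment a b \<inter> closed_segment c d = {}"
  using assms closed_segment_disjoint_if_same_side[where a=a and b=b and c=c and d=d]
      closed_segment_disjoint_if_same_side[where a=c and b=d and c=a and d=b]
  by blast

lemma planar_straight_line:
  fixes p :: "'a \<Rightarrow> complex"
  assumes "oriented V A" and inj: "inj_on p V"
    and covered: "\<And>v. v \<in> V \<Longrightarrow> \<exists>e\<in>A. v = fst e \<or> v = snd e"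
    and meet: "\<And>e e'. e \<in> A \<Longrightarrow> e' \<in> A \<Longrightarrow> e \<noteq> e' \<Longrightarrow>
      closed_segment (p (fst e)) (p (snd e)) \<inter> closed_segment (p (fst e')) (p (snd e'))
        \<subseteq> p ` ({fst e, snd e} \<inter> {fst e', snd e'})"
  shows "planar V A"
  unfolding planar_def
proof (intro exI conjI ballI impI)
  let ?g = "\<lambda>e. linepath (p (fst e)) (p (snd e))"
  have ends: "fst e \<in> V" "snd e \<in> V" "fst e \<noteq> snd e" if "e \<in> A" for e
    using that \<open>oriented V A\<close> unfolding oriented_def by auto
  show "inj_on p V"
    by (fact inj)
  show "arc (?g e)" if "e \<in> A" for e
  proof -
    have "p (fst e) \<noteq> p (snd e)"
      using ends[OF that] inj_onD[OF inj] by blast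
    then show ?thesis
      by (simp add: arc_linepath)
  qed
  show "pathstart (?g e) = p (fst e)" "pathfinish (?g e) = p (snd e)" for e
    by simp_all
  show "path_image (?g e) \<inter> path_image (?g e') \<subseteq> p ` ({fst e, snd e} \<inter> {fst e', snd e'})"
    if "e \<in> A" "e' \<in> A" "e \<noteq> e'" for e e'
    using meet[OF that] by simp
  show "v = fst e \<or> v = snd e"
    if e: "e \<in> A" and "v \<in> V" and on_e: "p v \<in> path_image (?g e)" for e v
  proof (rule ccontr)
    assume v: "\<not> (v = fst e \<or> v = snd e)"
    obtain e' where "e' \<in> A" and v': "v = fst e' \<or> v = snd e'"
      using covered[OF \<open>v \<in> V\<close>] by blast
    with v have "e \<noteq> e'"
      by auto
    have "p v \<in> closed_segment (p (fst e)) (p (snd e)) \<inter> closed_segment (p (fst e')) (p (snd e'))"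
      using on_e v' by auto
    then have "p v \<in> p ` ({fst e, snd e} \<inter> {fst e', snd e'})"
      using meet[OF e \<open>e' \<in> A\<close> \<open>e \<noteq> e'\<close>] by blast
    then obtain w where w: "w \<in> {fst e, snd e}" and "p v = p w"
      by blast
    moreover have "w \<in> V"
      using w ends[OF e] by blast
    ultimately have "v = w"
      using inj_onD[OF inj] \<open>v \<in> V\<close> by blast
    with v w show False
      by blast
  qed
qed

lemma B0_vertices: "B0_V = {1, 2, 3, 4, 5, 6, 7, 8}"
  unfolding B0_V_def by auto

lemma B0_arcs: "B0_A = {(5,4), (6,4), (7,4), (4,1), (4,2), (4,3), (1,2), (2,3), (5,6), (6,7),
    (8,1), (8,2), (8,3), (8,4), (8,5), (8,6), (8,7)}"
proof -
  have "{1..7::nat} = {1, 2, 3, 4, 5, 6, 7}"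
    by auto
  then have "{(8, i) | i. i \<in> {1..7::nat}} =
      {(8::nat, 1), (8, 2), (8, 3), (8, 4), (8, 5), (8, 6), (8, 7)}"
    by auto
  then show ?thesis
    unfolding B0_A_def by (simp only: Un_insert_left Un_empty_left)
qed

lemma B0_oriented: "oriented B0_V B0_A"
  unfolding oriented_iff_ball B0_vertices B0_arcs by simp

lemma B0_push_separated:
  assumes "a \<in> B0_V" and "c \<in> B0_V" and "a \<noteq> c"
  shows "push_separated B0_A a c"
proof -
  have via_x8: "push_separated B0_A a c"
    if "(a, m) \<in> B0_A" "(m, c) \<in> B0_A" "a \<in> {1..7}" "c \<in> {1..7}" for a m c
    using push_separatedI_paths[OF that(1,2), of 8] that(3,4) unfolding B0_A_def by blast
  have via_x4: "push_separated B0_A a c" "push_separated B0_A c a"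
    if "a \<in> {5, 6, 7}" "c \<in> {1, 2, 3}" for a c
  proof -
    show "push_separated B0_A a c"
      using via_x8[of a 4 c] that unfolding B0_arcs by auto
    then show "push_separated B0_A c a"
      by (rule push_separated_sym)
  qed
  have along_paths: "push_separated B0_A 1 3" "push_separated B0_A 5 7"
    using via_x8[of 1 2 3] via_x8[of 5 6 7] unfolding B0_arcs by simp_all
  have adjacent: "push_separated B0_A a c" if "(a, c) \<in> B0_A \<or> (c, a) \<in> B0_A" for a c
    using that push_separatedI_arc[of a c] push_separatedI_arc[of c a, THEN push_separated_sym]
    by blast
  have "\<forall>a\<in>B0_V. \<forall>c\<in>B0_V. a \<noteq> c \<longrightarrow> push_separated B0_A a c"
    unfolding B0_vertices using along_paths along_paths[THEN push_separated_sym]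
    by (simp add: via_x4 adjacent B0_arcs[THEN eqset_imp_iff])
  with assms show ?thesis
    by blast
qed

definition B0_drawing :: "nat \<Rightarrow> complex" where
  "B0_drawing v = (if v = 4 then Complex 0 (-9) else if v = 8 then Complex 0 5
     else Complex (real v - 4) ((real v - 4)\<^sup>2))"

text \<open>Stated for \<open>Suc 0\<close> rather than \<open>1\<close>, the simp normal form of \<open>1 :: nat\<close>.\<close>
lemma B0_drawing_simps:
  "B0_drawing (Suc 0) = Complex (-3) 9" "B0_drawing 2 = Complex (-2) 4"
  "B0_drawing 3 = Complex (-1) 1" "B0_drawing 4 = Complex 0 (-9)" "B0_drawing 5 = Complex 1 1"
  "B0_drawing 6 = Complex 2 4" "B0_drawing 7 = Complex 3 9" "B0_drawing 8 = Complex 0 5"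
  by (simp_all add: B0_drawing_def)

lemma B0_drawing_inj: "inj_on B0_drawing B0_V"
  unfolding inj_on_def B0_vertices by (auto simp: B0_drawing_simps)

lemma B0_drawing_segments:
  assumes "e \<in> B0_A" and "e' \<in> B0_A" and "e \<noteq> e'"
  shows "closed_segment (B0_drawing (fst e)) (B0_drawing (snd e))
      \<inter> closed_segment (B0_drawing (fst e')) (B0_drawing (snd e'))
    \<subseteq> B0_drawing ` ({fst e, snd e} \<inter> {fst e', snd e'})"
proof -
  have "\<forall>e\<in>B0_A. \<forall>e'\<in>B0_A. e \<noteq> e' \<longrightarrow>
      closed_segment (B0_drawing (fst e)) (B0_drawing (snd e))
        \<inter> closed_segment (B0_drawing (fst e')) (B0_drawing (snd e'))
      \<subseteq> B0_drawing ` ({fst e, snd e} \<inter> {fst e', snd e'})"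
    \<comment> \<open>Every one of the 272 ordered pairs of arcs is decided by one of the two rewrite rules:
      arcs with a common end are not collinear, and of two disjoint arcs one lies strictly
      on one side of the other's line.\<close>
    unfolding B0_arcs
    by (simp add: B0_drawing_simps complex_diff
        closed_segment_Int_common_end_any_order closed_segment_disjoint_if_separated)
  with assms show ?thesis
    by blast
qed

lemma B0_planar: "planar B0_V B0_A"
proof (rule planar_straight_line[OF B0_oriented B0_drawing_inj])
  show "\<exists>e\<in>B0_A. v = fst e \<or> v = snd e" if "v \<in> B0_V" for v
    using that unfolding B0_vertices B0_arcs by auto
qed (fact B0_drawing_segments)

theorem mainTheorem9:
  shows "oriented B0_V B0_A \<and> planar B0_V B0_A \<and> push_chromatic_number B0_V B0_A = 8 \<and>
    (\<forall>A' \<in> presentations B0_V B0_A. \<forall>(W :: 'b set) B f.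
        oriented W B \<and> ohom B0_V A' W B f \<longrightarrow> inj_on f B0_V)"
proof (intro conjI ballI allI impI)
  show "oriented B0_V B0_A"
    by (fact B0_oriented)
  show "planar B0_V B0_A"
    by (fact B0_planar)
  show "push_chromatic_number B0_V B0_A = 8"
    using push_chromatic_number_eq_card[OF _ B0_oriented B0_push_separated]
    by (simp add: B0_V_def)
  show "inj_on f B0_V"
    if "A' \<in> presentations B0_V B0_A" and "oriented W B \<and> ohom B0_V A' W B f"
    for A' and W :: "'b set" and B f
    using push_separated_inj_on[OF B0_push_separated] that by blast
qed

end
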